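(* Let $\mathcal{D}',\mathcal{D}''$ be two inputs of $\mathsf{SGDsub}$ that differ only in the user $Z_{1,1}$ (replaced by $Z'_{1,1}$), both run from the same initial point $x_0$ with the same parameters and with threshold parameter $\varsigma\ge0$ in $\mathsf{RobustEst}$; let $x_1$ and $y_1$ be the respective first iterates. If for some $\rho>0$ the pair $(\mathcal{D}',\mathcal{D}'')$ is $\rho$-aligned, then $\|x_1-y_1\|_\infty\le\eta(4\rho+2\varsigma)$.
   Context: $\mathcal{X}\subset\mathbb{R}^d$ is an $\ell_\infty$-ball, $\Pi_{\mathcal{X}}$ Euclidean projection onto it; $f(\cdot;z)$ are differentiable losses; each user is a set of $m$ data points. Robust statistic: a coordinatewise map $(X_1,\dots,X_B)\mapsto X_{\mathrm{rs}}\in\mathbb{R}^d$ such that (i) for any $\rho\ge0$, if more than $B/2$ of the $X_i$ lie in $B_\infty(X',\rho)$ then $X_{\mathrm{rs}}\in B_\infty(X',\rho)$; (ii) if $\|Y_i-X_i\|_\infty\le\Delta$ for all $i$ then $\|X_{\mathrm{rs}}-Y_{\mathrm{rs}}\|_\infty\le\Delta$; (iii) $(aX_i+b)_{\mathrm{rs}}=aX_{\mathrm{rs}}+b$. $\mathsf{RobustEst}(X_1,\dots,X_B;\varsigma)$: for each coordinate $j$ with $\bar x[j]=\frac1B\sum_iX_i[j]$, output the projection of $\bar x[j]$ onto $[X_{\mathrm{rs}}[j]-\varsigma,X_{\mathrm{rs}}[j]+\varsigma]$ if $|X_{\mathrm{rs}}[j]-\bar x[j]|\ge\varsigma$, else $\bar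 x[j]$. $\mathsf{SGDsub}$ with step size $\eta$: users split into groups $\{Z_{i,t}\}_{t\in[T]}$, $i\in[B]$; at step $t$, $q_t(Z_{i,t})=\frac1m\sum_{z\in Z_{i,t}}\nabla f(x_{t-1};z)$, $g_{t-1}=\mathsf{RobustEst}(q_t(Z_{1,t}),\dots,q_t(Z_{B,t});\varsigma)$, $x_t=\Pi_{\mathcal{X}}(x_{t-1}-\eta g_{t-1})$; write $q'_t$, $y_t$ for the analogous quantities on $\mathcal{D}''$. The pair is $\rho$-aligned if there are points $X',Y'$ with $|\{i\in[B]:q_1(Z_{i,1})\in B_\infty(X',\rho)\}|\ge 2B/3$ and $|\{i\in[B]:q'_1(Z'_{i,1})\in B_\infty(Y',\rho)\}|\ge2B/3$ (where $Z'_{i,1}=Z_{i,1}$ for $i\neq1$).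
   Formalization: The number B of groups is at least 4, the initial point $x_0$ lies in the ball $\mathcal{X}$, and the step size $\eta$ is positive. Apart from conventions, each condition added here is assumed in the paper as well or is needed for the statement above to hold. *)

theory Defs
  imports "HOL-Analysis.Analysis"
begin

definition linf_cball :: "real^'d \<Rightarrow> real \<Rightarrow> (real^'d) set" where
  "linf_cball c r = {y. infnorm (y - c) \<le> r}"

definition robust_statistic :: "nat \<Rightarrow> ((nat \<Rightarrow> real^'d) \<Rightarrow> real^'d) \<Rightarrow> bool" where
  "robust_statistic B rs \<longleftrightarrow>
     (\<exists>r :: (nat \<Rightarrow> real) \<Rightarrow> real. \<forall>X j. rs X $ j = r (\<lambda>i. X i $ j)) \<and>
     (\<forall>X X' \<rho>. \<rho> \<ge> 0 \<longrightarrow> real (card {i\<in>{1..B}. X i \<in> linf_cball X' \<rho>}) > real B / 2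
         \<longrightarrow> rs X \<in> linf_cball X' \<rho>) \<and>
     (\<forall>X Y \<Delta>. (\<forall>i\<in>{1..B}. infnorm (Y i - X i) \<le> \<Delta>) \<longrightarrow> infnorm (rs X - rs Y) \<le> \<Delta>) \<and>
     (\<forall>X (a::real) b. rs (\<lambda>i. a *\<^sub>R X i + b) = a *\<^sub>R rs X + b)"

definition robust_est ::
  "((nat \<Rightarrow> real^'d) \<Rightarrow> real^'d) \<Rightarrow> nat \<Rightarrow> real \<Rightarrow> (nat \<Rightarrow> real^'d) \<Rightarrow> real^'d" where
  "robust_est rs B vs X = (\<chi> j.
     let xbar = (\<Sum>i=1..B. X i $ j) / real B; r = rs X $ j in
     if \<bar>r - xbar\<bar> \<ge> vs then max (r - vs) (min (r + vs) xbar) else xbar)"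

text \<open>q(Z) = (1/m) sum_{z in Z} grad f(x; z); G z x is the gradient of f(.; z) at x.\<close>
definition qgrad :: "('z \<Rightarrow> real^'d \<Rightarrow> real^'d) \<Rightarrow> nat \<Rightarrow> 'z set \<Rightarrow> real^'d \<Rightarrow> real^'d" where
  "qgrad G m Z x = (1 / real m) *\<^sub>R (\<Sum>z\<in>Z. G z x)"

text \<open>Iterates of SGDsub: Z i t is the user (group) i used at step t; Xs the constraint set.\<close>
fun sgdsub :: "((nat \<Rightarrow> real^'d) \<Rightarrow> real^'d) \<Rightarrow> nat \<Rightarrow> real \<Rightarrow> real \<Rightarrow>
    ('z \<Rightarrow> real^'d \<Rightarrow> real^'d) \<Rightarrow> nat \<Rightarrow> (real^'d) set \<Rightarrow> (nat \<Rightarrow> nat \<Rightarrow> 'z set) \<Rightarrow>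
    real^'d \<Rightarrow> nat \<Rightarrow> real^'d" where
  "sgdsub rs B vs \<eta> G m Xs Z x0 0 = x0"
| "sgdsub rs B vs \<eta> G m Xs Z x0 (Suc t) =
     (let x = sgdsub rs B vs \<eta> G m Xs Z x0 t in
      closest_point Xs (x - \<eta> *\<^sub>R robust_est rs B vs (\<lambda>i. qgrad G m (Z i (Suc t)) x)))"

definition rho_aligned :: "('z \<Rightarrow> real^'d \<Rightarrow> real^'d) \<Rightarrow> nat \<Rightarrow> nat \<Rightarrow>
    (nat \<Rightarrow> nat \<Rightarrow> 'z set) \<Rightarrow> (nat \<Rightarrow> nat \<Rightarrow> 'z set) \<Rightarrow> real^'d \<Rightarrow> real \<Rightarrow> bool" where
  "rho_aligned G m B Z Z' x0 \<rho> \<longleftrightarrow>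
     (\<exists>X' Y'.
        real (card {i\<in>{1..B}. qgrad G m (Z i 1) x0 \<in> linf_cball X' \<rho>}) \<ge> 2 * real B / 3 \<and>
        real (card {i\<in>{1..B}. qgrad G m (Z' i 1) x0 \<in> linf_cball Y' \<rho>}) \<ge> 2 * real B / 3)"

end

theory Submission
  imports Defs
begin

text \<open>The two robust statistics are pinned to \<rho>-balls around the two alignment centres, and
  since two 2/3-majorities of B \<ge> 4 users share an unchanged user, the centres lie within
  2\<rho> of each other; hence the statistics differ by at most 4\<rho>. The threshold step of
  RobustEst moves each estimate by at most \<open>vs\<close> away from its statistic, and projecting onto
  an l-infinity ball clamps each coordinate, which is 1-Lipschitz in the sup norm.\<close>

lemma infnorm_le_cart:
  fixes x :: "real^'n"
  assumes "\<And>j. \<bar>x $ j\<bar> \<le> e"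
  shows "infnorm x \<le> e"
  unfolding infnorm_cart by (rule cSup_least) (use assms in auto)

lemma mem_linf_cball_cart: "y \<in> linf_cball c R \<longleftrightarrow> (\<forall>j. \<bar>y $ j - c $ j\<bar> \<le> R)"
  unfolding linf_cball_def using infnorm_le_cart[of "y - c" R] component_le_infnorm_cart[of "y - c"]
  by (auto intro: order_trans)

lemma linf_cball_eq_cbox: "linf_cball c R = cbox (c - (\<chi> j. R)) (c + (\<chi> j. R))"
  by (auto simp: mem_linf_cball_cart mem_box_cart abs_le_iff algebra_simps)

lemma closest_point_linf_cball:
  fixes a c :: "real^'n"
  assumes "R \<ge> 0"
  shows "closest_point (linf_cball c R) a = (\<chi> j. max (c $ j - R) (min (c $ j + R) (a $ j)))"
    (is "_ = ?p")
proof (rule closest_point_unique[symmetric])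
  show "?p \<in> linf_cball c R"
    using assms by (auto simp: mem_linf_cball_cart)
  show "\<forall>z\<in>linf_cball c R. dist a ?p \<le> dist a z"
  proof
    fix z assume "z \<in> linf_cball c R"
    then have z: "\<bar>z $ j - c $ j\<bar> \<le> R" for j by (auto simp: mem_linf_cball_cart)
    have "dist (a $ j) (?p $ j) \<le> dist (a $ j) (z $ j)" for j
      using z[of j] by (auto simp: dist_real_def abs_le_iff)
    then show "dist a ?p \<le> dist a z"
      unfolding dist_vec_def by (intro L2_set_mono) auto
  qed
qed (auto simp: linf_cball_eq_cbox convex_box closed_cbox)

lemma infnorm_closest_point_linf_cball_diff_le:
  fixes a b c :: "real^'n"
  assumes "R \<ge> 0"
  shows "infnorm (closest_point (linf_cball c R) a - closest_point (linf_cball c R) b)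
           \<le> infnorm (a - b)"
proof (rule infnorm_le_cart)
  fix j
  have "\<bar>a $ j - b $ j\<bar> \<le> infnorm (a - b)"
    using component_le_infnorm_cart[of "a - b" j] by simp
  then show "\<bar>(closest_point (linf_cball c R) a - closest_point (linf_cball c R) b) $ j\<bar>
               \<le> infnorm (a - b)"
    by (auto simp: closest_point_linf_cball[OF assms] abs_le_iff)
qed

lemma infnorm_projected_step_diff_le:
  fixes x g g' c :: "real^'n"
  assumes "R \<ge> 0" "\<eta> \<ge> 0"
  shows "infnorm (closest_point (linf_cball c R) (x - \<eta> *\<^sub>R g)
                  - closest_point (linf_cball c R) (x - \<eta> *\<^sub>R g'))
           \<le> \<eta> * infnorm (g - g')"
proof -
  have "infnorm (closest_point (linf_cball c R) (x - \<eta> *\<^sub>R g)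
                 - closest_point (linf_cball c R) (x - \<eta> *\<^sub>R g'))
          \<le> infnorm ((x - \<eta> *\<^sub>R g) - (x - \<eta> *\<^sub>R g'))"
    by (rule infnorm_closest_point_linf_cball_diff_le[OF assms(1)])
  also have "\<dots> = infnorm (- (\<eta> *\<^sub>R (g - g')))"
    by (simp add: algebra_simps)
  also have "\<dots> = \<eta> * infnorm (g - g')"
    using assms(2) by (simp only: infnorm_neg infnorm_mul abs_of_nonneg)
  finally show ?thesis .
qed

lemma infnorm_robust_est_minus_rs_le:
  assumes "vs \<ge> 0"
  shows "infnorm (robust_est rs B vs X - rs X) \<le> vs"
  by (rule infnorm_le_cart) (use assms in \<open>auto simp: robust_est_def Let_def\<close>)

lemma infnorm_robust_est_diff_le:
  assumes "vs \<ge> 0"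
  shows "infnorm (robust_est rs B vs X - robust_est rs B vs Y) \<le> infnorm (rs X - rs Y) + 2 * vs"
proof -
  have "infnorm (robust_est rs B vs X - robust_est rs B vs Y)
          \<le> infnorm (robust_est rs B vs X - rs X) + infnorm (rs X - rs Y)
             + infnorm (robust_est rs B vs Y - rs Y)"
    using infnorm_triangle[of "robust_est rs B vs X - rs X" "rs X - rs Y"]
      infnorm_triangle[of "robust_est rs B vs X - rs Y" "rs Y - robust_est rs B vs Y"]
    by (simp add: infnorm_sub[of "rs Y"])
  then show ?thesis
    using infnorm_robust_est_minus_rs_le[OF assms, of rs B X]
      infnorm_robust_est_minus_rs_le[OF assms, of rs B Y]
    by linarith
qed

lemma card_add_le_card_Int:
  assumes "finite S" "A \<subseteq> S" "C \<subseteq> S"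
  shows "card A + card C \<le> card S + card (A \<inter> C)"
proof -
  have "finite A" "finite C"
    using assms finite_subset by auto
  then have "card A + card C = card (A \<union> C) + card (A \<inter> C)"
    by (rule card_Un_Int)
  moreover have "card (A \<union> C) \<le> card S"
    using assms by (intro card_mono) auto
  ultimately show ?thesis by linarith
qed

lemma common_elem_ne:
  assumes "finite S" "A \<subseteq> S" "C \<subseteq> S" "card S + 2 \<le> card A + card C"
  obtains i where "i \<in> A" "i \<in> C" "i \<noteq> k"
proof -
  have "2 \<le> card (A \<inter> C)"
    using card_add_le_card_Int[OF assms(1-3)] assms(4) by linarith
  moreover have "card (A \<inter> C) \<le> 1" if "A \<inter> C \<subseteq> {k}"
    using card_mono[OF _ that] by simp
  ultimately have "\<not> A \<inter> C \<subseteq> {k}"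
    by linarith
  then show thesis
    using that by blast
qed

lemma robust_statistic_mem_linf_cball:
  assumes "robust_statistic B rs" "\<rho> \<ge> 0" "B > 0"
    and "real (card {i\<in>{1..B}. X i \<in> linf_cball X' \<rho>}) \<ge> 2 * real B / 3"
  shows "rs X \<in> linf_cball X' \<rho>"
proof -
  have "real (card {i\<in>{1..B}. X i \<in> linf_cball X' \<rho>}) > real B / 2"
    using assms(3,4) by linarith
  then show ?thesis
    using assms(1,2) unfolding robust_statistic_def by blast
qed

lemma robust_statistic_diff_le_if_aligned:
  assumes rs: "robust_statistic B rs" and B: "B \<ge> 4" and \<rho>: "\<rho> \<ge> 0"
    and same: "\<And>i. i \<noteq> k \<Longrightarrow> X i = Y i"
    and X': "real (card {i\<in>{1..B}. X i \<in> linf_cball X' \<rho>}) \<ge> 2 * real B / 3"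
    and Y': "real (card {i\<in>{1..B}. Y i \<in> linf_cball Y' \<rho>}) \<ge> 2 * real B / 3"
  shows "infnorm (rs X - rs Y) \<le> 4 * \<rho>"
proof -
  let ?A = "{i\<in>{1..B}. X i \<in> linf_cball X' \<rho>}" and ?C = "{i\<in>{1..B}. Y i \<in> linf_cball Y' \<rho>}"
  have "real (2 * B) \<le> real (3 * card ?A)" "real (2 * B) \<le> real (3 * card ?C)"
    using X' Y' by simp_all
  \<comment> \<open>by integrality: \<open>3 (a + c) \<ge> 4 B\<close> forces \<open>a + c \<ge> B + 2\<close> once \<open>B \<ge> 4\<close>\<close>
  then have majorities: "card {1..B} + 2 \<le> card ?A + card ?C"
    unfolding of_nat_le_iff using B by simp
  obtain i where "i \<in> ?A" "i \<in> ?C" "i \<noteq> k"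
    by (rule common_elem_ne[of "{1..B}" ?A ?C k]) (use majorities in auto)
  then have "X i \<in> linf_cball X' \<rho>" "Y i \<in> linf_cball Y' \<rho>" "X i = Y i"
    using same by auto
  then have centres: "infnorm (X' - Y') \<le> 2 * \<rho>"
    using infnorm_triangle[of "X' - X i" "Y i - Y'"]
    by (simp add: linf_cball_def infnorm_sub[of X'])
  have "infnorm (rs X - X') \<le> \<rho>" "infnorm (Y' - rs Y) \<le> \<rho>"
    using robust_statistic_mem_linf_cball[OF rs \<rho>] X' Y' B
    by (auto simp: linf_cball_def infnorm_sub[of Y'])
  then show ?thesis
    using centres infnorm_triangle[of "rs X - X'" "X' - Y'"]
      infnorm_triangle[of "rs X - Y'" "Y' - rs Y"]
    by simp
qed

theorem lemma3p6:
  fixes f :: "real^'d \<Rightarrow> 'z \<Rightarrow> real"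
    and G :: "'z \<Rightarrow> real^'d \<Rightarrow> real^'d"
    and rs :: "(nat \<Rightarrow> real^'d) \<Rightarrow> real^'d"
    and Z Z' :: "nat \<Rightarrow> nat \<Rightarrow> 'z set"
    and c x0 :: "real^'d"
    and R \<eta> vs \<rho> :: real
    and B T m :: nat
  assumes grad: "\<And>z x. ((\<lambda>y. f y z) has_derivative (\<lambda>h. G z x \<bullet> h)) (at x)"
    and R: "R \<ge> 0"
    and x0: "x0 \<in> linf_cball c R"
    and rs: "robust_statistic B rs"
    and B: "B \<ge> 4"
    and T: "T \<ge> 1"
    and m: "m > 0"
    and users: "\<And>i t. i \<in> {1..B} \<Longrightarrow> t \<in> {1..T} \<Longrightarrow> card (Z i t) = m"
    and users': "\<And>i t. i \<in> {1..B} \<Longrightarrow> t \<in> {1..T} \<Longrightarrow> card (Z' i t) = m"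
    and differ: "\<And>i t. (i, t) \<noteq> (1, 1) \<Longrightarrow> Z' i t = Z i t"
    and eta: "\<eta> > 0"
    and varsigma: "vs \<ge> 0"
    and rho: "\<rho> > 0"
    and aligned: "rho_aligned G m B Z Z' x0 \<rho>"
  shows "infnorm (sgdsub rs B vs \<eta> G m (linf_cball c R) Z x0 1
                - sgdsub rs B vs \<eta> G m (linf_cball c R) Z' x0 1)
           \<le> \<eta> * (4 * \<rho> + 2 * vs)"
proof -
  define X where "X = (\<lambda>i. qgrad G m (Z i 1) x0)"
  define Y where "Y = (\<lambda>i. qgrad G m (Z' i 1) x0)"
  obtain X' Y' where
    "real (card {i\<in>{1..B}. X i \<in> linf_cball X' \<rho>}) \<ge> 2 * real B / 3"
    "real (card {i\<in>{1..B}. Y i \<in> linf_cball Y' \<rho>}) \<ge> 2 * real B / 3"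
    using aligned by (auto simp: rho_aligned_def X_def Y_def)
  moreover have "X i = Y i" if "i \<noteq> 1" for i
    using differ[of i 1] that by (simp add: X_def Y_def)
  ultimately have "infnorm (rs X - rs Y) \<le> 4 * \<rho>"
    using rho B by (intro robust_statistic_diff_le_if_aligned[OF rs]) auto
  then have "infnorm (robust_est rs B vs X - robust_est rs B vs Y) \<le> 4 * \<rho> + 2 * vs"
    using infnorm_robust_est_diff_le[OF varsigma, of rs B X Y] by linarith
  then have "\<eta> * infnorm (robust_est rs B vs X - robust_est rs B vs Y) \<le> \<eta> * (4 * \<rho> + 2 * vs)"
    using eta by (simp add: mult_left_mono)
  moreover have "infnorm (sgdsub rs B vs \<eta> G m (linf_cball c R) Z x0 1
                          - sgdsub rs B vs \<eta> G m (linf_cball c R) Z' x0 1)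
                   \<le> \<eta> * infnorm (robust_est rs B vs X - robust_est rs B vs Y)"
    using infnorm_projected_step_diff_le[OF R, of \<eta> c x0] eta by (simp add: X_def Y_def)
  ultimately show ?thesis
    by linarith
qed

end
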